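(* Let $k$ be a field, $A=k[\![x,y]\!]$, and $\mathfrak m=(x,y)$. Then $\Phi=\operatorname{Spec} A\setminus\{\mathfrak m\}$ is not a coherent subset of $\operatorname{Spec} A$.
   Context: $\operatorname{Ass} M$ is the set of associated primes of $M$. For $\Phi\subseteq\operatorname{Spec} A$, $\operatorname{Inj}_\Phi A$ is the full subcategory of injective $A$-modules $I$ with $\operatorname{Ass} I\subseteq\Phi$; $\Phi$ is coherent if every homomorphism $I^0\to I^1$ in $\operatorname{Inj}_\Phi A$ can be completed to an exact sequence $I^0\to I^1\to I^2$ with $I^2\in\operatorname{Inj}_\Phi A$. *)

theory Defs
  imports "HOL-Algebra.Module" "HOL-Algebra.Ideal"
begin

text \<open>A power series in x,y over k is its coefficient function nat \<times> nat \<Rightarrow> k;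
  (i,j) is the coefficient of x^i y^j.\<close>

definition PS2 :: "(nat \<times> nat \<Rightarrow> 'k::field) ring" where
  "PS2 = \<lparr> carrier = UNIV,
           monoid.mult = (\<lambda>f g (i, j). \<Sum>a\<le>i. \<Sum>b\<le>j. f (a, b) * g (i - a, j - b)),
           one = (\<lambda>(i, j). if i = 0 \<and> j = 0 then 1 else 0),
           zero = (\<lambda>_. 0),
           add = (\<lambda>f g p. f p + g p) \<rparr>"

definition PS2_X :: "nat \<times> nat \<Rightarrow> 'k::field" where
  "PS2_X = (\<lambda>p. if p = (1, 0) then 1 else 0)"

definition PS2_Y :: "nat \<times> nat \<Rightarrow> 'k::field" where
  "PS2_Y = (\<lambda>p. if p = (0, 1) then 1 else 0)"

definition PS2_max :: "(nat \<times> nat \<Rightarrow> 'k::field) set" where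
  "PS2_max = genideal PS2 {PS2_X, PS2_Y}"

definition Spec :: "('a, 'e) ring_scheme \<Rightarrow> 'a set set" where
  "Spec R = {P. primeideal P R}"

definition annihilator :: "('a, 'e) ring_scheme \<Rightarrow> ('a, 'b) module \<Rightarrow> 'b \<Rightarrow> 'a set" where
  "annihilator R M v = {a \<in> carrier R. a \<odot>\<^bsub>M\<^esub> v = \<zero>\<^bsub>M\<^esub>}"

definition Ass :: "('a, 'e) ring_scheme \<Rightarrow> ('a, 'b) module \<Rightarrow> 'a set set" where
  "Ass R M = {P \<in> Spec R. \<exists>v \<in> carrier M. P = annihilator R M v}"

definition module_hom :: "('a, 'e) ring_scheme \<Rightarrow> ('a, 'b) module \<Rightarrow> ('a, 'c) module \<Rightarrow> ('b \<Rightarrow> 'c) set" where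
  "module_hom R M N = {f. f \<in> carrier M \<rightarrow> carrier N
      \<and> (\<forall>x \<in> carrier M. \<forall>y \<in> carrier M. f (x \<oplus>\<^bsub>M\<^esub> y) = f x \<oplus>\<^bsub>N\<^esub> f y)
      \<and> (\<forall>a \<in> carrier R. \<forall>x \<in> carrier M. f (a \<odot>\<^bsub>M\<^esub> x) = a \<odot>\<^bsub>N\<^esub> f x)}"

text \<open>Injective module, via Baer's criterion: every R-linear map from an ideal J
  of R to M extends to R, i.e. is multiplication by some element of M.\<close>
definition injective_module :: "('a, 'e) ring_scheme \<Rightarrow> ('a, 'b) module \<Rightarrow> bool" where
  "injective_module R M \<longleftrightarrow> module R M \<and>
     (\<forall>J h. ideal J R \<and> h \<in> J \<rightarrow> carrier M
        \<and> (\<forall>x \<in> J. \<forall>y \<in> J. h (x \<oplus>\<^bsub>R\<^esub> y) = h x \<oplus>\<^bsub>M\<^esub> h y)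
        \<and> (\<forall>a \<in> carrier R. \<forall>x \<in> J. h (a \<otimes>\<^bsub>R\<^esub> x) = a \<odot>\<^bsub>M\<^esub> h x)
      \<longrightarrow> (\<exists>v \<in> carrier M. \<forall>x \<in> J. h x = x \<odot>\<^bsub>M\<^esub> v))"

definition Inj_Phi :: "('a, 'e) ring_scheme \<Rightarrow> 'a set set \<Rightarrow> ('a, 'b) module \<Rightarrow> bool" where
  "Inj_Phi R \<Phi> M \<longleftrightarrow> injective_module R M \<and> Ass R M \<subseteq> \<Phi>"

definition exact_at :: "('a, 'b) module \<Rightarrow> ('a, 'c) module \<Rightarrow> ('a, 'd) module
    \<Rightarrow> ('b \<Rightarrow> 'c) \<Rightarrow> ('c \<Rightarrow> 'd) \<Rightarrow> bool" where
  "exact_at M N P f g \<longleftrightarrow> f ` carrier M = {y \<in> carrier N. g y = \<zero>\<^bsub>P\<^esub>}"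

text \<open>Coherence of Phi, relative to the carrier types: I0, I1 range over modules
  whose elements live in type 'm, I2 over modules with elements in type 'c.
  Since HOL cannot quantify over types inside a formula, the genuine notion
  is obtained by letting these types vary.\<close>
definition coherent_on :: "'m itself \<Rightarrow> 'c itself \<Rightarrow> ('a, 'e) ring_scheme \<Rightarrow> 'a set set \<Rightarrow> bool" where
  "coherent_on _ _ R \<Phi> \<longleftrightarrow>
     (\<forall>(I0 :: ('a, 'm) module) (I1 :: ('a, 'm) module) f.
        Inj_Phi R \<Phi> I0 \<and> Inj_Phi R \<Phi> I1 \<and> f \<in> module_hom R I0 I1 \<longrightarrow>
        (\<exists>(I2 :: ('a, 'c) module) g. Inj_Phi R \<Phi> I2 \<and> g \<in> module_hom R I1 I2
            \<and> exact_at I0 I1 I2 f g))"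

end

theory Submission
  imports Defs "HOL-Computational_Algebra.Formal_Power_Series" "HOL-Computational_Algebra.Fraction_Field"
begin

text \<open>The \<open>k\<close>-duals \<open>D(A\<^sub>t) = Hom\<^sub>k(A\<^sub>t, k)\<close> of the localizations \<open>A\<^sub>t\<close>, \<open>t \<in> {x, y, x y}\<close>,
  are injective \<open>A\<close>-modules (Baer's criterion reduces to extending \<open>k\<close>-linear functionals), and
  \<open>m\<close> is not associated to any of them because \<open>x\<close> or \<open>y\<close> is invertible on \<open>A\<^sub>t\<close>.
  If \<open>\<Phi>\<close> were coherent, the restriction map \<open>D(A\<^sub>x\<^sub>y) \<rightarrow> D(A\<^sub>x) \<oplus> D(A\<^sub>y)\<close> would
  have its cokernel embedded in some \<open>I\<^sub>2\<close> with \<open>Ass I\<^sub>2 \<subseteq> \<Phi>\<close>. Let \<open>\<epsilon>\<close> be the constant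
  term of the Laurent expansion in \<open>x, y\<close>. The class of \<open>w = (\<epsilon>|\<^sub>A\<^sub>x, 0)\<close> has annihilator
  exactly \<open>m\<close>: \<open>x w\<close> and \<open>y w\<close> are the restrictions of \<open>x \<epsilon>\<close> and \<open>0\<close>, while for a unit \<open>a\<close>
  the two components of \<open>a w\<close> disagree at \<open>1\<close>. Hence \<open>m \<in> Ass I\<^sub>2\<close>.\<close>

unbundle fps_syntax

definition prod_module :: "('a, 'b) module \<Rightarrow> ('a, 'c) module \<Rightarrow> ('a, 'b \<times> 'c) module" where
  "prod_module M N = \<lparr>carrier = carrier M \<times> carrier N, monoid.mult = (\<lambda>x y. x),
     one = (\<one>\<^bsub>M\<^esub>, \<one>\<^bsub>N\<^esub>), zero = (\<zero>\<^bsub>M\<^esub>, \<zero>\<^bsub>N\<^esub>),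
     add = (\<lambda>x y. (fst x \<oplus>\<^bsub>M\<^esub> fst y, snd x \<oplus>\<^bsub>N\<^esub> snd y)),
     smult = (\<lambda>a x. (a \<odot>\<^bsub>M\<^esub> fst x, a \<odot>\<^bsub>N\<^esub> snd x))\<rparr>"

lemma prod_module_simps [simp]:
  "carrier (prod_module M N) = carrier M \<times> carrier N"
  "\<zero>\<^bsub>prod_module M N\<^esub> = (\<zero>\<^bsub>M\<^esub>, \<zero>\<^bsub>N\<^esub>)"
  "x \<oplus>\<^bsub>prod_module M N\<^esub> y = (fst x \<oplus>\<^bsub>M\<^esub> fst y, snd x \<oplus>\<^bsub>N\<^esub> snd y)"
  "a \<odot>\<^bsub>prod_module M N\<^esub> x = (a \<odot>\<^bsub>M\<^esub> fst x, a \<odot>\<^bsub>N\<^esub> snd x)"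
  by (simp_all add: prod_module_def)

lemma module_prod_module:
  assumes "Module.module R M" and "Module.module R N"
  shows "Module.module R (prod_module M N)"
proof -
  interpret M: Module.module R M by fact
  interpret N: Module.module R N by fact
  show ?thesis
  proof (rule moduleI)
    show "abelian_group (prod_module M N)"
    proof (rule abelian_groupI)
      fix x assume "x \<in> carrier (prod_module M N)"
      then show "\<exists>y\<in>carrier (prod_module M N). y \<oplus>\<^bsub>prod_module M N\<^esub> x = \<zero>\<^bsub>prod_module M N\<^esub>"
        by (intro bexI[of _ "(\<ominus>\<^bsub>M\<^esub> fst x, \<ominus>\<^bsub>N\<^esub> snd x)"]) (auto simp: M.l_neg N.l_neg)
    qed (auto simp: M.a_ac N.a_ac)
  qed (auto simp: M.is_cring M.smult_l_distr N.smult_l_distr M.smult_r_distr N.smult_r_distr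
         M.smult_assoc1 N.smult_assoc1)
qed

lemma injective_moduleI:
  assumes "Module.module R M"
    and "\<And>J h. ideal J R \<Longrightarrow> h \<in> J \<rightarrow> carrier M \<Longrightarrow>
      (\<And>x y. x \<in> J \<Longrightarrow> y \<in> J \<Longrightarrow> h (x \<oplus>\<^bsub>R\<^esub> y) = h x \<oplus>\<^bsub>M\<^esub> h y) \<Longrightarrow>
      (\<And>a x. a \<in> carrier R \<Longrightarrow> x \<in> J \<Longrightarrow> h (a \<otimes>\<^bsub>R\<^esub> x) = a \<odot>\<^bsub>M\<^esub> h x) \<Longrightarrow>
      \<exists>v\<in>carrier M. \<forall>x\<in>J. h x = x \<odot>\<^bsub>M\<^esub> v"
  shows "injective_module R M"
  using assms unfolding injective_module_def by simp

lemma injective_moduleD: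
  assumes "injective_module R M" and "ideal J R" and "h \<in> J \<rightarrow> carrier M"
    and "\<And>x y. x \<in> J \<Longrightarrow> y \<in> J \<Longrightarrow> h (x \<oplus>\<^bsub>R\<^esub> y) = h x \<oplus>\<^bsub>M\<^esub> h y"
    and "\<And>a x. a \<in> carrier R \<Longrightarrow> x \<in> J \<Longrightarrow> h (a \<otimes>\<^bsub>R\<^esub> x) = a \<odot>\<^bsub>M\<^esub> h x"
  obtains v where "v \<in> carrier M" and "\<And>x. x \<in> J \<Longrightarrow> h x = x \<odot>\<^bsub>M\<^esub> v"
  using assms unfolding injective_module_def by (metis (no_types, lifting))

lemma injective_module_prod_module:
  assumes M: "injective_module R M" and N: "injective_module R N"
  shows "injective_module R (prod_module M N)"
proof (rule injective_moduleI)
  show "Module.module R (prod_module M N)"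
    using M N by (simp add: injective_module_def module_prod_module)
  fix J h
  assume J: "ideal J R" and hJ: "h \<in> J \<rightarrow> carrier (prod_module M N)"
    and add: "\<And>x y. x \<in> J \<Longrightarrow> y \<in> J \<Longrightarrow> h (x \<oplus>\<^bsub>R\<^esub> y) = h x \<oplus>\<^bsub>prod_module M N\<^esub> h y"
    and smult: "\<And>a x. a \<in> carrier R \<Longrightarrow> x \<in> J \<Longrightarrow> h (a \<otimes>\<^bsub>R\<^esub> x) = a \<odot>\<^bsub>prod_module M N\<^esub> h x"
  from hJ have "(\<lambda>x. fst (h x)) \<in> J \<rightarrow> carrier M" "(\<lambda>x. snd (h x)) \<in> J \<rightarrow> carrier N"
    by (auto simp: Pi_iff mem_Times_iff)
  obtain v1 where "v1 \<in> carrier M" "\<And>x. x \<in> J \<Longrightarrow> fst (h x) = x \<odot>\<^bsub>M\<^esub> v1"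
    by (rule injective_moduleD[OF M J \<open>(\<lambda>x. fst (h x)) \<in> J \<rightarrow> carrier M\<close>]) (simp_all add: add smult)
  moreover obtain v2 where "v2 \<in> carrier N" "\<And>x. x \<in> J \<Longrightarrow> snd (h x) = x \<odot>\<^bsub>N\<^esub> v2"
    by (rule injective_moduleD[OF N J \<open>(\<lambda>x. snd (h x)) \<in> J \<rightarrow> carrier N\<close>]) (simp_all add: add smult)
  ultimately show "\<exists>v\<in>carrier (prod_module M N). \<forall>x\<in>J. h x = x \<odot>\<^bsub>prod_module M N\<^esub> v"
    by (intro bexI[of _ "(v1, v2)"]) (auto simp: prod_eq_iff)
qed

definition transport_module :: "('b \<Rightarrow> 'c) \<Rightarrow> ('a, 'b) module \<Rightarrow> ('a, 'c) module" where
  "transport_module e M = \<lparr>carrier = e ` carrier M, monoid.mult = (\<lambda>x y. x), one = e \<one>\<^bsub>M\<^esub>,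
     zero = e \<zero>\<^bsub>M\<^esub>,
     add = (\<lambda>x y. e (inv_into (carrier M) e x \<oplus>\<^bsub>M\<^esub> inv_into (carrier M) e y)),
     smult = (\<lambda>a x. e (a \<odot>\<^bsub>M\<^esub> inv_into (carrier M) e x))\<rparr>"

lemma transport_module_carrier [simp]: "carrier (transport_module e M) = e ` carrier M"
  and transport_module_zero [simp]: "\<zero>\<^bsub>transport_module e M\<^esub> = e \<zero>\<^bsub>M\<^esub>"
  by (simp_all add: transport_module_def)

context
  fixes e :: "'b \<Rightarrow> 'c" and M :: "('a, 'b) module"
  assumes e: "inj_on e (carrier M)"
begin

lemma transport_module_ops [simp]:
  "x \<in> carrier M \<Longrightarrow> y \<in> carrier M \<Longrightarrow> e x \<oplus>\<^bsub>transport_module e M\<^esub> e y = e (x \<oplus>\<^bsub>M\<^esub> y)"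
  "x \<in> carrier M \<Longrightarrow> a \<odot>\<^bsub>transport_module e M\<^esub> e x = e (a \<odot>\<^bsub>M\<^esub> x)"
  using e by (simp_all add: transport_module_def)

lemma module_transport_module:
  assumes "Module.module R M"
  shows "Module.module R (transport_module e M)"
proof -
  interpret M: Module.module R M by fact
  show ?thesis
  proof (rule moduleI)
    show "abelian_group (transport_module e M)"
    proof (rule abelian_groupI)
      fix x assume "x \<in> carrier (transport_module e M)"
      then obtain x' where "x' \<in> carrier M" "x = e x'" by auto
      then show "\<exists>y\<in>carrier (transport_module e M). y \<oplus>\<^bsub>transport_module e M\<^esub> x = \<zero>\<^bsub>transport_module e M\<^esub>"
        by (intro bexI[of _ "e (\<ominus>\<^bsub>M\<^esub> x')"]) (auto simp: M.l_neg)
    qed (auto simp: M.a_ac)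
  qed (auto simp: M.is_cring M.smult_l_distr M.smult_r_distr M.smult_assoc1)
qed

lemma injective_module_transport_module:
  assumes inj: "injective_module R M"
  shows "injective_module R (transport_module e M)"
proof (rule injective_moduleI)
  have M: "Module.module R M" using inj by (simp add: injective_module_def)
  then show "Module.module R (transport_module e M)" by (rule module_transport_module)
  fix J h
  assume J: "ideal J R" and "h \<in> J \<rightarrow> carrier (transport_module e M)"
    and add: "\<And>x y. x \<in> J \<Longrightarrow> y \<in> J \<Longrightarrow> h (x \<oplus>\<^bsub>R\<^esub> y) = h x \<oplus>\<^bsub>transport_module e M\<^esub> h y"
    and smult: "\<And>a x. a \<in> carrier R \<Longrightarrow> x \<in> J \<Longrightarrow> h (a \<otimes>\<^bsub>R\<^esub> x) = a \<odot>\<^bsub>transport_module e M\<^esub> h x"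
  then have hJ: "\<And>x. x \<in> J \<Longrightarrow> h x \<in> e ` carrier M"
    by auto
  interpret M: Module.module R M by (fact M)
  define d where "d x = inv_into (carrier M) e (h x)" for x
  have d: "d x \<in> carrier M" "h x = e (d x)" if "x \<in> J" for x
    using hJ[OF that] by (auto simp: d_def inv_into_into f_inv_into_f)
  have "d \<in> J \<rightarrow> carrier M" using d by blast
  then obtain v where v: "v \<in> carrier M" "\<And>x. x \<in> J \<Longrightarrow> d x = x \<odot>\<^bsub>M\<^esub> v"
  proof (rule injective_moduleD[OF inj J])
    fix x y assume "x \<in> J" "y \<in> J"
    then have "e (d (x \<oplus>\<^bsub>R\<^esub> y)) = e (d x \<oplus>\<^bsub>M\<^esub> d y)"
      using add d additive_subgroup.a_closed[OF ideal.axioms(1)[OF J]] by simp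
    then show "d (x \<oplus>\<^bsub>R\<^esub> y) = d x \<oplus>\<^bsub>M\<^esub> d y"
      using \<open>x \<in> J\<close> \<open>y \<in> J\<close> d e additive_subgroup.a_closed[OF ideal.axioms(1)[OF J]]
      by (auto dest: inj_onD)
  next
    fix a x assume "a \<in> carrier R" "x \<in> J"
    then have "e (d (a \<otimes>\<^bsub>R\<^esub> x)) = e (a \<odot>\<^bsub>M\<^esub> d x)"
      using smult d ideal.I_l_closed[OF J] by simp
    then show "d (a \<otimes>\<^bsub>R\<^esub> x) = a \<odot>\<^bsub>M\<^esub> d x"
      using \<open>a \<in> carrier R\<close> \<open>x \<in> J\<close> d e ideal.I_l_closed[OF J] by (auto dest: inj_onD)
  qed blast
  have "h x = x \<odot>\<^bsub>transport_module e M\<^esub> e v" if "x \<in> J" for x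
    using that d v by simp
  with v show "\<exists>w\<in>carrier (transport_module e M). \<forall>x\<in>J. h x = x \<odot>\<^bsub>transport_module e M\<^esub> w"
    by auto
qed

lemma Ass_transport_module:
  assumes "Module.module R M"
  shows "Ass R (transport_module e M) = Ass R M"
proof -
  interpret M: Module.module R M by fact
  have "annihilator R (transport_module e M) (e v) = annihilator R M v" if "v \<in> carrier M" for v
    using that e by (auto simp: annihilator_def inj_on_eq_iff)
  then show ?thesis by (auto simp: Ass_def)
qed

lemma Inj_Phi_transport_module:
  assumes "Inj_Phi R \<Phi> M"
  shows "Inj_Phi R \<Phi> (transport_module e M)"
proof -
  have "injective_module R M" and "Ass R M \<subseteq> \<Phi>"
    using assms by (simp_all add: Inj_Phi_def)
  moreover from this have "Module.module R M"
    by (simp add: injective_module_def)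
  ultimately show ?thesis
    by (simp add: Inj_Phi_def injective_module_transport_module Ass_transport_module)
qed

lemma module_hom_comp_transport_module:
  assumes g: "g \<in> Defs.module_hom R (transport_module e M) N"
  shows "g \<circ> e \<in> Defs.module_hom R M N"
proof -
  have "g (e (x \<oplus>\<^bsub>M\<^esub> y)) = g (e x) \<oplus>\<^bsub>N\<^esub> g (e y)" if "x \<in> carrier M" "y \<in> carrier M" for x y
  proof -
    have "g (e (x \<oplus>\<^bsub>M\<^esub> y)) = g (e x \<oplus>\<^bsub>transport_module e M\<^esub> e y)"
      using that by simp
    also have "\<dots> = g (e x) \<oplus>\<^bsub>N\<^esub> g (e y)"
      using g that unfolding Defs.module_hom_def transport_module_carrier by blast
    finally show ?thesis .
  qed
  moreover have "g (e (a \<odot>\<^bsub>M\<^esub> x)) = a \<odot>\<^bsub>N\<^esub> g (e x)" if "a \<in> carrier R" "x \<in> carrier M" for a x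
  proof -
    have "g (e (a \<odot>\<^bsub>M\<^esub> x)) = g (a \<odot>\<^bsub>transport_module e M\<^esub> e x)"
      using that by simp
    also have "\<dots> = a \<odot>\<^bsub>N\<^esub> g (e x)"
      using g that unfolding Defs.module_hom_def transport_module_carrier by blast
    finally show ?thesis .
  qed
  ultimately show ?thesis
    using g by (auto simp: Defs.module_hom_def)
qed

end

lemma module_hom_transport_module:
  assumes "Module.module R M" and e0: "inj_on e0 (carrier M)" and e1: "inj_on e1 (carrier N)"
    and f: "f \<in> Defs.module_hom R M N"
  shows "(\<lambda>x. e1 (f (inv_into (carrier M) e0 x)))
           \<in> Defs.module_hom R (transport_module e0 M) (transport_module e1 N)"
proof -
  interpret M: Module.module R M by fact
  show ?thesis
    using f e0 e1 by (auto simp: Defs.module_hom_def Pi_iff)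
qed

lemma coherent_onE:
  fixes I0 :: "('a, 'b) module" and I1 :: "('a, 'd) module"
    and e0 :: "'b \<Rightarrow> 'm" and e1 :: "'d \<Rightarrow> 'm"
  assumes coh: "coherent_on TYPE('m) TYPE('c) R \<Phi>"
    and I0: "Inj_Phi R \<Phi> I0" and I1: "Inj_Phi R \<Phi> I1" and f: "f \<in> Defs.module_hom R I0 I1"
    and e0: "inj_on e0 (carrier I0)" and e1: "inj_on e1 (carrier I1)"
  obtains I2 :: "('a, 'c) module" and g
  where "Inj_Phi R \<Phi> I2" and "g \<in> Defs.module_hom R I1 I2" and "exact_at I0 I1 I2 f g"
proof -
  let ?T0 = "transport_module e0 I0" and ?T1 = "transport_module e1 I1"
  let ?f = "\<lambda>x. e1 (f (inv_into (carrier I0) e0 x))"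
  have I0_module: "Module.module R I0"
    using I0 by (simp add: Inj_Phi_def injective_module_def)
  have "Inj_Phi R \<Phi> ?T0 \<and> Inj_Phi R \<Phi> ?T1 \<and> ?f \<in> Defs.module_hom R ?T0 ?T1"
    using Inj_Phi_transport_module[OF e0 I0] Inj_Phi_transport_module[OF e1 I1]
      module_hom_transport_module[OF I0_module e0 e1 f] by blast
  then obtain I2 :: "('a, 'c) module" and g where I2: "Inj_Phi R \<Phi> I2"
    and g: "g \<in> Defs.module_hom R ?T1 I2" and ex: "exact_at ?T0 ?T1 I2 ?f g"
    using coh[unfolded coherent_on_def, rule_format] by blast
  have f_into: "f ` carrier I0 \<subseteq> carrier I1"
    using f by (auto simp: Defs.module_hom_def)
  have "?f ` carrier ?T0 = e1 ` f ` carrier I0"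
    using e0 by (auto simp: image_image)
  with ex have ker: "e1 ` f ` carrier I0 = {y \<in> e1 ` carrier I1. g y = \<zero>\<^bsub>I2\<^esub>}"
    by (simp add: exact_at_def)
  have "y \<in> f ` carrier I0 \<longleftrightarrow> y \<in> carrier I1 \<and> g (e1 y) = \<zero>\<^bsub>I2\<^esub>" for y
  proof (cases "y \<in> carrier I1")
    case True
    then have "y \<in> f ` carrier I0 \<longleftrightarrow> e1 y \<in> e1 ` f ` carrier I0"
      using inj_on_image_mem_iff[OF e1 True f_into] by simp
    with ker True show ?thesis by auto
  qed (use f_into in auto)
  then have "f ` carrier I0 = {y \<in> carrier I1. (g \<circ> e1) y = \<zero>\<^bsub>I2\<^esub>}"
    by auto
  then have "exact_at I0 I1 I2 f (g \<circ> e1)"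
    by (simp add: exact_at_def)
  with I2 module_hom_comp_transport_module[OF e1 g] show thesis by (rule that)
qed

lemma notin_Ass:
  assumes "Module.module R M"
    and "\<And>v. v \<in> carrier M \<Longrightarrow> \<forall>a\<in>P. a \<odot>\<^bsub>M\<^esub> v = \<zero>\<^bsub>M\<^esub> \<Longrightarrow> v = \<zero>\<^bsub>M\<^esub>"
  shows "P \<notin> Ass R M"
proof
  interpret M: Module.module R M by fact
  assume "P \<in> Ass R M"
  then obtain v where P: "primeideal P R" and v: "v \<in> carrier M" "P = annihilator R M v"
    by (auto simp: Ass_def Spec_def)
  then have "v = \<zero>\<^bsub>M\<^esub>"
    using assms(2) by (simp add: annihilator_def)
  then have "P = carrier R"
    using v by (auto simp: annihilator_def)
  with P show False
    using primeideal.I_notcarr by blast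
qed

lemma Inj_Phi_Spec_Diff:
  "Inj_Phi R (Spec R - {P}) M \<longleftrightarrow> injective_module R M \<and> P \<notin> Ass R M"
  by (auto simp: Inj_Phi_def Ass_def)

lemma Ass_of_exact_at:
  assumes "Module.module R I1" and g: "g \<in> Defs.module_hom R I1 I2" and "exact_at I0 I1 I2 f g"
    and w: "w \<in> carrier I1" and P: "P \<in> Spec R"
    and ann: "\<And>a. a \<in> carrier R \<Longrightarrow> a \<odot>\<^bsub>I1\<^esub> w \<in> f ` carrier I0 \<longleftrightarrow> a \<in> P"
  shows "P \<in> Ass R I2"
proof -
  interpret I1: Module.module R I1 by fact
  have "a \<odot>\<^bsub>I2\<^esub> g w = \<zero>\<^bsub>I2\<^esub> \<longleftrightarrow> a \<in> P" if "a \<in> carrier R" for a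
  proof -
    have "a \<odot>\<^bsub>I2\<^esub> g w = g (a \<odot>\<^bsub>I1\<^esub> w)"
      using g that w by (simp add: Defs.module_hom_def)
    with \<open>exact_at I0 I1 I2 f g\<close> that w ann show ?thesis
      by (auto simp: exact_at_def)
  qed
  moreover have "P \<subseteq> carrier R"
    using P by (simp add: Spec_def primeideal_def ideal_def additive_subgroup.a_subset)
  ultimately have "annihilator R I2 (g w) = P"
    by (auto simp: annihilator_def)
  moreover have "g w \<in> carrier I2"
    using g w by (auto simp: Defs.module_hom_def)
  ultimately show ?thesis
    using P by (auto simp: Ass_def)
qed

lemma module_hom_closed: "f \<in> Defs.module_hom R M N \<Longrightarrow> x \<in> carrier M \<Longrightarrow> f x \<in> carrier N"
  by (auto simp: Defs.module_hom_def)

lemma module_hom_smult: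
  "f \<in> Defs.module_hom R M N \<Longrightarrow> a \<in> carrier R \<Longrightarrow> x \<in> carrier M \<Longrightarrow> f (a \<odot>\<^bsub>M\<^esub> x) = a \<odot>\<^bsub>N\<^esub> f x"
  by (simp add: Defs.module_hom_def)

lemma module_hom_image_lincomb:
  assumes "Module.module R M" and f: "f \<in> Defs.module_hom R M N"
    and "x \<in> f ` carrier M" "y \<in> f ` carrier M" "a \<in> carrier R" "b \<in> carrier R"
  shows "a \<odot>\<^bsub>N\<^esub> x \<oplus>\<^bsub>N\<^esub> b \<odot>\<^bsub>N\<^esub> y \<in> f ` carrier M"
proof -
  interpret M: Module.module R M by fact
  obtain x' y' where "x' \<in> carrier M" "y' \<in> carrier M" "x = f x'" "y = f y'"
    using assms by auto
  with f \<open>a \<in> carrier R\<close> \<open>b \<in> carrier R\<close>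
  have "a \<odot>\<^bsub>N\<^esub> x \<oplus>\<^bsub>N\<^esub> b \<odot>\<^bsub>N\<^esub> y = f (a \<odot>\<^bsub>M\<^esub> x' \<oplus>\<^bsub>M\<^esub> b \<odot>\<^bsub>M\<^esub> y')"
    by (simp add: Defs.module_hom_def)
  with \<open>x' \<in> carrier M\<close> \<open>y' \<in> carrier M\<close> \<open>a \<in> carrier R\<close> \<open>b \<in> carrier R\<close> show ?thesis
    by simp
qed

lemma module_hom_pair:
  assumes "f \<in> Defs.module_hom R M N1" and "g \<in> Defs.module_hom R M N2"
  shows "(\<lambda>x. (f x, g x)) \<in> Defs.module_hom R M (prod_module N1 N2)"
  using assms by (auto simp: Defs.module_hom_def)

section \<open>The ring \<open>k[[x, y]]\<close>\<close>

type_synonym 'k ps = "nat \<times> nat \<Rightarrow> 'k"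

text \<open>\<open>k[[x, y]]\<close> is identified with \<open>k[[y]][[x]]\<close>: the outer variable is \<open>x = fps_X\<close>,
  the inner one \<open>y = fps_Y\<close>.\<close>

definition to_fps2 :: "'k::field ps \<Rightarrow> 'k fps fps" where
  "to_fps2 a = Abs_fps (\<lambda>i. Abs_fps (\<lambda>j. a (i, j)))"

definition of_fps2 :: "'k::field fps fps \<Rightarrow> 'k ps" where
  "of_fps2 b = (\<lambda>(i, j). b $ i $ j)"

abbreviation fps_Y :: "'k::field fps fps" where
  "fps_Y \<equiv> fps_const fps_X"

lemma to_fps2_nth [simp]: "to_fps2 a $ i $ j = a (i, j)"
  by (simp add: to_fps2_def)

lemma to_fps2_of_fps2 [simp]: "to_fps2 (of_fps2 b) = b"
  by (simp add: to_fps2_def of_fps2_def fps_eq_iff)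

lemma of_fps2_to_fps2 [simp]: "of_fps2 (to_fps2 a) = a"
  by (simp add: of_fps2_def)

lemma to_fps2_eqI: "to_fps2 a = to_fps2 b \<Longrightarrow> a = b"
  by (metis of_fps2_to_fps2)

lemma PS2_simps:
  "\<one>\<^bsub>PS2\<^esub> = (\<lambda>(i, j). if i = 0 \<and> j = 0 then 1 else 0)"
  "\<zero>\<^bsub>PS2\<^esub> = (\<lambda>_. 0)"
  "a \<oplus>\<^bsub>PS2\<^esub> b = (\<lambda>p. a p + b p)"
  "a \<otimes>\<^bsub>PS2\<^esub> b = (\<lambda>(i, j). \<Sum>a'\<le>i. \<Sum>b'\<le>j. a (a', b') * b (i - a', j - b'))"
  by (simp_all add: PS2_def)

lemma PS2_carrier [simp]: "carrier PS2 = UNIV"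
  by (simp add: PS2_def)

lemma to_fps2_mult: "to_fps2 (a \<otimes>\<^bsub>PS2\<^esub> b) = to_fps2 a * to_fps2 b"
  by (simp add: PS2_simps fps_eq_iff fps_mult_nth fps_sum_nth atLeast0AtMost)

lemma to_fps2_add: "to_fps2 (a \<oplus>\<^bsub>PS2\<^esub> b) = to_fps2 a + to_fps2 b"
  by (simp add: PS2_simps fps_eq_iff)

lemma to_fps2_one: "to_fps2 \<one>\<^bsub>PS2\<^esub> = 1"
  by (simp add: PS2_simps fps_eq_iff)

lemma to_fps2_zero: "to_fps2 \<zero>\<^bsub>PS2\<^esub> = 0"
  by (simp add: PS2_simps fps_eq_iff)

lemma to_fps2_PS2_X: "to_fps2 PS2_X = fps_X"
  by (simp add: PS2_X_def fps_eq_iff)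

lemma to_fps2_PS2_Y: "to_fps2 PS2_Y = fps_Y"
  by (auto simp: PS2_Y_def fps_eq_iff)

lemma cring_PS2: "cring (PS2 :: 'k::field ps ring)"
proof (rule cringI)
  show "abelian_group (PS2 :: 'k ps ring)"
  proof (rule abelian_groupI)
    fix x :: "'k ps"
    show "\<exists>y\<in>carrier PS2. y \<oplus>\<^bsub>PS2\<^esub> x = \<zero>\<^bsub>PS2\<^esub>"
      by (rule bexI[of _ "\<lambda>p. - x p"]) (auto simp: PS2_simps)
  qed (auto simp: algebra_simps PS2_simps)
  show "comm_monoid (PS2 :: 'k ps ring)"
  proof (rule comm_monoidI)
    fix x y z :: "'k ps"
    show "(x \<otimes>\<^bsub>PS2\<^esub> y) \<otimes>\<^bsub>PS2\<^esub> z = x \<otimes>\<^bsub>PS2\<^esub> (y \<otimes>\<^bsub>PS2\<^esub> z)"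
      by (rule to_fps2_eqI) (simp add: to_fps2_mult mult.assoc)
    show "\<one>\<^bsub>PS2\<^esub> \<otimes>\<^bsub>PS2\<^esub> x = x"
      by (rule to_fps2_eqI) (simp add: to_fps2_mult to_fps2_one)
    show "x \<otimes>\<^bsub>PS2\<^esub> y = y \<otimes>\<^bsub>PS2\<^esub> x"
      by (rule to_fps2_eqI) (simp add: to_fps2_mult mult.commute)
  qed auto
  fix x y z :: "'k ps"
  show "(x \<oplus>\<^bsub>PS2\<^esub> y) \<otimes>\<^bsub>PS2\<^esub> z = x \<otimes>\<^bsub>PS2\<^esub> z \<oplus>\<^bsub>PS2\<^esub> y \<otimes>\<^bsub>PS2\<^esub> z"
    by (rule to_fps2_eqI) (simp add: to_fps2_mult to_fps2_add distrib_right)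
qed

lemma fps2_nth_mult_X_power:
  "(b * fps_X ^ m) $ i $ j = (if i < m then 0 else b $ (i - m) $ j)"
  by (simp add: fps_X_power_mult_right_nth)

lemma fps2_nth_mult_Y_power:
  "(b * fps_Y ^ m) $ i $ j = (if j < m then 0 else b $ i $ (j - m))"
  by (simp add: fps_const_power fps_X_power_mult_right_nth)

lemma PS2_mult_00: "(a \<otimes>\<^bsub>PS2\<^esub> b) (0, 0) = a (0, 0) * b (0, 0)"
  by (simp add: PS2_simps)

lemma PS2_XY_combination_nth:
  "to_fps2 ((b \<otimes>\<^bsub>PS2\<^esub> PS2_X) \<oplus>\<^bsub>PS2\<^esub> (c \<otimes>\<^bsub>PS2\<^esub> PS2_Y)) $ i $ j =
     (if i = 0 then 0 else b (i - 1, j)) + (if j = 0 then 0 else c (i, j - 1))"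
  by (simp add: to_fps2_add to_fps2_mult to_fps2_PS2_X to_fps2_PS2_Y)

lemma PS2_decomp_XY:
  fixes a :: "'k::field ps"
  assumes "a (0, 0) = 0"
  obtains b c where "a = (b \<otimes>\<^bsub>PS2\<^esub> PS2_X) \<oplus>\<^bsub>PS2\<^esub> (c \<otimes>\<^bsub>PS2\<^esub> PS2_Y)"
proof -
  define b :: "'k ps" where "b = (\<lambda>(i, j). a (i + 1, j))"
  define c :: "'k ps" where "c = (\<lambda>(i, j). if i = 0 then a (0, j + 1) else 0)"
  have "to_fps2 a $ i $ j = to_fps2 ((b \<otimes>\<^bsub>PS2\<^esub> PS2_X) \<oplus>\<^bsub>PS2\<^esub> (c \<otimes>\<^bsub>PS2\<^esub> PS2_Y)) $ i $ j"
    for i j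
    unfolding PS2_XY_combination_nth using assms by (cases i; cases j) (simp_all add: b_def c_def)
  then have "a = (b \<otimes>\<^bsub>PS2\<^esub> PS2_X) \<oplus>\<^bsub>PS2\<^esub> (c \<otimes>\<^bsub>PS2\<^esub> PS2_Y)"
    by (intro to_fps2_eqI) (simp add: fps_eq_iff)
  then show thesis by (rule that)
qed

lemma ideal_PS2_coeff00: "ideal {a :: 'k::field ps. a (0, 0) = 0} PS2"
proof -
  interpret R: cring "PS2 :: 'k ps ring" by (rule cring_PS2)
  have neg: "\<ominus>\<^bsub>PS2\<^esub> a = (\<lambda>p. - a p)" for a :: "'k ps"
    by (rule R.minus_equality) (simp_all add: PS2_simps)
  show ?thesis
  proof (rule idealI)
    show "subgroup {a :: 'k ps. a (0, 0) = 0} (add_monoid PS2)"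
      by (rule R.add.subgroupI) (auto simp: a_inv_def[symmetric] neg PS2_simps)
  qed (auto simp: PS2_mult_00 R.ring_axioms)
qed

lemma PS2_max_eq: "PS2_max = {a :: 'k::field ps. a (0, 0) = 0}"
proof
  interpret R: cring "PS2 :: 'k ps ring" by (rule cring_PS2)
  have XY: "{PS2_X, PS2_Y} \<subseteq> {a :: 'k ps. a (0, 0) = 0}"
    by (simp add: PS2_X_def PS2_Y_def)
  show "PS2_max \<subseteq> {a :: 'k ps. a (0, 0) = 0}"
    unfolding PS2_max_def using R.genideal_minimal[OF ideal_PS2_coeff00 XY] by simp
  have idl: "ideal (PS2_max :: 'k ps set) PS2"
    unfolding PS2_max_def by (rule R.genideal_ideal) simp
  have XY_in: "(PS2_X :: 'k ps) \<in> PS2_max" "(PS2_Y :: 'k ps) \<in> PS2_max"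
    unfolding PS2_max_def using R.genideal_self[of "{PS2_X, PS2_Y}"] by auto
  show "{a :: 'k ps. a (0, 0) = 0} \<subseteq> PS2_max"
  proof
    fix a :: "'k ps" assume "a \<in> {a. a (0, 0) = 0}"
    then obtain b c where "a = (b \<otimes>\<^bsub>PS2\<^esub> PS2_X) \<oplus>\<^bsub>PS2\<^esub> (c \<otimes>\<^bsub>PS2\<^esub> PS2_Y)"
      using PS2_decomp_XY by blast
    then show "a \<in> PS2_max"
      using XY_in ideal.I_l_closed[OF idl] additive_subgroup.a_closed[OF ideal.axioms(1)[OF idl]]
      by simp
  qed
qed

lemma primeideal_PS2_max: "primeideal (PS2_max :: 'k::field ps set) PS2"
  unfolding PS2_max_eq
proof (rule primeidealI[OF ideal_PS2_coeff00 cring_PS2])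
  have "((\<lambda>_. 1) :: 'k ps) \<notin> {a. a (0, 0) = 0}"
    by simp
  then show "carrier PS2 \<noteq> {a :: 'k ps. a (0, 0) = 0}"
    by (metis PS2_carrier UNIV_I)
qed (auto simp: PS2_mult_00)

section \<open>The fraction field and its localizations\<close>

type_synonym 'k fps2_fract = "'k fps fps fract"

definition to_fract :: "'k::field ps \<Rightarrow> 'k fps2_fract" where
  "to_fract a = Fract (to_fps2 a) 1"

lemma to_fract_add: "to_fract (a \<oplus>\<^bsub>PS2\<^esub> b) = to_fract a + to_fract b"
  by (simp add: to_fract_def to_fps2_add add_fract)

lemma to_fract_mult: "to_fract (a \<otimes>\<^bsub>PS2\<^esub> b) = to_fract a * to_fract b"
  by (simp add: to_fract_def to_fps2_mult mult_fract)

lemma to_fract_one: "to_fract \<one>\<^bsub>PS2\<^esub> = 1"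
  by (simp add: to_fract_def to_fps2_one One_fract_def)

lemma to_fract_mult_Fract: "to_fract a * Fract b s = Fract (to_fps2 a * b) s"
  by (simp add: to_fract_def mult_fract)

definition const_scale :: "'k::field \<Rightarrow> 'k fps2_fract \<Rightarrow> 'k fps2_fract" where
  "const_scale c q = Fract (fps_const (fps_const c)) 1 * q"

lemma const_scale_eq_to_fract: "const_scale c q = to_fract (of_fps2 (fps_const (fps_const c))) * q"
  by (simp add: const_scale_def to_fract_def)

lemma const_scale_Fract: "const_scale c (Fract b s) = Fract (fps_const (fps_const c) * b) s"
  by (simp add: const_scale_def mult_fract)

lemma vector_space_const_scale: "vector_space (const_scale :: 'k::field \<Rightarrow> 'k fps2_fract \<Rightarrow> _)"
proof unfold_locales
  fix a b :: 'k and x y :: "'k fps2_fract"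
  have Fract_const_add: "Fract (fps_const (fps_const (a + b))) 1
      = Fract (fps_const (fps_const a)) 1 + (Fract (fps_const (fps_const b)) 1 :: 'k fps2_fract)"
    by (simp add: add_fract)
  show "const_scale a (x + y) = const_scale a x + const_scale a y"
    by (simp add: const_scale_def distrib_left)
  show "const_scale (a + b) x = const_scale a x + const_scale b x"
    by (simp only: const_scale_def Fract_const_add distrib_right)
  show "const_scale a (const_scale b x) = const_scale (a * b) x"
    by (simp only: const_scale_def fps_const_mult[symmetric] mult_fract mult.assoc[symmetric] mult_1_left)
  show "const_scale 1 x = x"
    by (simp add: const_scale_def One_fract_def[symmetric])
qed

lemma (in vector_space_pair) linear_extend_from_subspace:
  assumes W: "vs1.subspace W"
    and add: "\<And>x y. x \<in> W \<Longrightarrow> y \<in> W \<Longrightarrow> f (x + y) = f x + f y"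
    and scale: "\<And>c x. x \<in> W \<Longrightarrow> f (s1 c x) = s2 c (f x)"
  obtains g where "Vector_Spaces.linear s1 s2 g" and "\<And>x. x \<in> W \<Longrightarrow> g x = f x"
proof -
  obtain B where B: "B \<subseteq> W" "vs1.independent B" "W \<subseteq> vs1.span B" "card B = vs1.dim W"
    by (rule vs1.basis_exists)
  obtain g where g: "Vector_Spaces.linear s1 s2 g" "\<forall>x\<in>B. g x = f x"
    using linear_independent_extend[OF B(2), of f] by blast
  have "x \<in> W \<and> g x = f x" if "x \<in> vs1.span B" for x
    using that
  proof (induction rule: vs1.span_induct_alt)
    case base
    have "f 0 = 0"
      using add[of 0 0] W by (simp add: vs1.subspace_0)
    with W show ?case
      by (simp add: vs1.subspace_0 linear_0[OF g(1)])
  next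
    case (step c x y)
    then have "x \<in> W" "s1 c x \<in> W"
      using B(1) W vs1.subspace_scale by blast+
    with step W g(2) show ?case
      by (simp add: add scale linear_add[OF g(1)] linear_scale[OF g(1)] vs1.subspace_add)
  qed
  with g(1) B(3) show thesis
    by (intro that[of g]) auto
qed

definition k_linear_on :: "'k::field fps2_fract set \<Rightarrow> ('k fps2_fract \<Rightarrow> 'k) \<Rightarrow> bool" where
  "k_linear_on W f \<longleftrightarrow>
     (\<forall>p\<in>W. \<forall>q\<in>W. f (p + q) = f p + f q) \<and> (\<forall>c. \<forall>p\<in>W. f (const_scale c p) = c * f p)"

lemma k_linear_on_extend:
  fixes f :: "'k::field fps2_fract \<Rightarrow> 'k"
  assumes "0 \<in> W" and "\<And>p q. p \<in> W \<Longrightarrow> q \<in> W \<Longrightarrow> p + q \<in> W"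
    and "\<And>c p. p \<in> W \<Longrightarrow> const_scale c p \<in> W" and "k_linear_on W f"
  obtains g where "k_linear_on UNIV g" and "\<And>p. p \<in> W \<Longrightarrow> g p = f p"
proof -
  interpret V: vector_space "const_scale :: 'k \<Rightarrow> 'k fps2_fract \<Rightarrow> _"
    by (rule vector_space_const_scale)
  interpret VP: vector_space_pair "const_scale :: 'k \<Rightarrow> 'k fps2_fract \<Rightarrow> _" "(*)"
    by unfold_locales (simp_all add: algebra_simps)
  have "V.subspace W"
    using assms(1-3) by (simp add: V.subspace_def)
  then obtain g where "Vector_Spaces.linear const_scale (*) g" "\<And>p. p \<in> W \<Longrightarrow> g p = f p"
    using assms(4) VP.linear_extend_from_subspace[of W f] by (auto simp: k_linear_on_def)
  then show thesis
    by (intro that[of g]) (auto simp: k_linear_on_def VP.linear_add VP.linear_scale)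
qed

definition Loc :: "'k::field fps fps \<Rightarrow> 'k fps2_fract set" where
  "Loc t = {Fract b (t ^ n) | b n. True}"

lemma Fract_in_Loc [simp]: "Fract b (t ^ n) \<in> Loc t"
  by (auto simp: Loc_def)

lemma LocE:
  assumes "q \<in> Loc t"
  obtains b n where "q = Fract b (t ^ n)"
  using assms by (auto simp: Loc_def)

lemma zero_in_Loc: "0 \<in> Loc t"
  using Fract_in_Loc[of 0 t 0] by (simp add: Zero_fract_def)

lemma one_in_Loc: "1 \<in> Loc t"
  using Fract_in_Loc[of 1 t 0] by (simp add: One_fract_def)

lemma Fract_power_add:
  "t \<noteq> 0 \<Longrightarrow> Fract b (t ^ n) + Fract b' (t ^ m) = Fract (b * t ^ m + b' * t ^ n) (t ^ (n + m))"
  by (simp add: add_fract power_add)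

lemma Loc_add:
  assumes "t \<noteq> 0" and "p \<in> Loc t" and "q \<in> Loc t"
  shows "p + q \<in> Loc t"
proof -
  obtain b n b' m where "p = Fract b (t ^ n)" and "q = Fract b' (t ^ m)"
    using assms(2,3) by (metis LocE)
  then have "p + q = Fract (b * t ^ m + b' * t ^ n) (t ^ (n + m))"
    by (simp only: Fract_power_add[OF assms(1)])
  then show ?thesis
    by (simp only: Fract_in_Loc)
qed

lemma Loc_to_fract_mult: "q \<in> Loc t \<Longrightarrow> to_fract a * q \<in> Loc t"
  by (auto elim!: LocE simp: to_fract_mult_Fract)

lemma Loc_const_scale: "q \<in> Loc t \<Longrightarrow> const_scale c q \<in> Loc t"
  by (auto elim!: LocE simp: const_scale_Fract)

lemma Loc_subset_mult:
  assumes "t \<noteq> 0" and "u \<noteq> 0"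
  shows "Loc t \<subseteq> Loc (t * u)"
proof
  fix q assume "q \<in> Loc t"
  then obtain b n where "q = Fract b (t ^ n)" by (rule LocE)
  also have "\<dots> = Fract (b * u ^ n) ((t * u) ^ n)"
    using assms by (simp add: eq_fract power_mult_distrib)
  finally show "q \<in> Loc (t * u)" by simp
qed

definition Loc_lift ::
    "'k::field fps fps \<Rightarrow> ('k fps fps \<Rightarrow> bool) \<Rightarrow> ('k fps fps \<Rightarrow> nat \<Rightarrow> 'a) \<Rightarrow> 'k fps2_fract \<Rightarrow> 'a" where
  "Loc_lift t P F q = (case SOME (b, n). P b \<and> q = Fract b (t ^ n) of (b, n) \<Rightarrow> F b n)"

lemma Loc_lift_Fract:
  assumes t: "t \<noteq> 0" and "P b"
    and F: "\<And>b n b' m. P b \<Longrightarrow> P b' \<Longrightarrow> b * t ^ m = b' * t ^ n \<Longrightarrow> F b n = F b' m"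
  shows "Loc_lift t P F (Fract b (t ^ n)) = F b n"
proof -
  let ?R = "\<lambda>(b', m). P b' \<and> Fract b (t ^ n) = Fract b' (t ^ m)"
  obtain b' m where bm: "(SOME p. ?R p) = (b', m)"
    by (cases "SOME p. ?R p")
  have "?R (b, n)"
    using \<open>P b\<close> by simp
  then have "?R (SOME p. ?R p)"
    by (rule someI)
  with bm t have "P b'" "b * t ^ m = b' * t ^ n"
    by (auto simp: eq_fract)
  with bm show ?thesis
    using F[OF \<open>P b\<close>] by (simp add: Loc_lift_def)
qed

text \<open>The \<open>k\<close>-dual \<open>Hom\<^sub>k(F, k)\<close> of an \<open>A\<close>-submodule \<open>F\<close> of the fraction field: functionals
  are extended by zero outside \<open>F\<close>, and \<open>a\<close> acts by \<open>(a \<phi>)(q) = \<phi>(a q)\<close>.\<close>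

definition k_dual :: "'k::field fps2_fract set \<Rightarrow> ('k ps, 'k fps2_fract \<Rightarrow> 'k) module" where
  "k_dual F = \<lparr>carrier = {\<phi>. k_linear_on F \<phi> \<and> (\<forall>q. q \<notin> F \<longrightarrow> \<phi> q = 0)},
     monoid.mult = (\<lambda>\<phi> \<psi> q. 0), one = (\<lambda>q. 0), zero = (\<lambda>q. 0),
     add = (\<lambda>\<phi> \<psi> q. \<phi> q + \<psi> q),
     smult = (\<lambda>a \<phi> q. if q \<in> F then \<phi> (to_fract a * q) else 0)\<rparr>"

lemma k_dual_simps [simp]:
  "carrier (k_dual F) = {\<phi>. k_linear_on F \<phi> \<and> (\<forall>q. q \<notin> F \<longrightarrow> \<phi> q = 0)}"
  "\<zero>\<^bsub>k_dual F\<^esub> = (\<lambda>q. 0)"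
  "\<phi> \<oplus>\<^bsub>k_dual F\<^esub> \<psi> = (\<lambda>q. \<phi> q + \<psi> q)"
  "a \<odot>\<^bsub>k_dual F\<^esub> \<phi> = (\<lambda>q. if q \<in> F then \<phi> (to_fract a * q) else 0)"
  by (simp_all add: k_dual_def)

definition PS2_submodule :: "'k::field fps2_fract set \<Rightarrow> bool" where
  "PS2_submodule F \<longleftrightarrow> 0 \<in> F \<and> (\<forall>p\<in>F. \<forall>q\<in>F. p + q \<in> F) \<and> (\<forall>a. \<forall>p\<in>F. to_fract a * p \<in> F)"

lemma PS2_submodule_Loc: "t \<noteq> 0 \<Longrightarrow> PS2_submodule (Loc t)"
  by (simp add: PS2_submodule_def zero_in_Loc Loc_add Loc_to_fract_mult)

lemma PS2_submodule_const_scale: "PS2_submodule F \<Longrightarrow> p \<in> F \<Longrightarrow> const_scale c p \<in> F"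
  by (simp add: PS2_submodule_def const_scale_eq_to_fract)

lemma k_dual_smult_closed:
  assumes F: "PS2_submodule F" and \<phi>: "\<phi> \<in> carrier (k_dual F)"
  shows "a \<odot>\<^bsub>k_dual F\<^esub> \<phi> \<in> carrier (k_dual F)"
proof -
  have add: "\<And>p q. p \<in> F \<Longrightarrow> q \<in> F \<Longrightarrow> p + q \<in> F"
    and mult: "\<And>a p. p \<in> F \<Longrightarrow> to_fract a * p \<in> F"
    using F by (simp_all add: PS2_submodule_def)
  have "\<phi> (to_fract a * (p + q)) = \<phi> (to_fract a * p) + \<phi> (to_fract a * q)" if "p \<in> F" "q \<in> F" for p q
    using \<phi> mult[OF that(1)] mult[OF that(2)] by (simp add: k_linear_on_def distrib_left)
  moreover have "\<phi> (to_fract a * const_scale c p) = c * \<phi> (to_fract a * p)" if "p \<in> F" for c p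
  proof -
    have "to_fract a * const_scale c p = const_scale c (to_fract a * p)"
      by (simp add: const_scale_def mult.left_commute)
    with \<phi> mult[OF that] show ?thesis
      by (simp add: k_linear_on_def)
  qed
  ultimately show ?thesis
    using add PS2_submodule_const_scale[OF F] by (auto simp: k_linear_on_def)
qed

lemma module_k_dual:
  fixes F :: "'k::field fps2_fract set"
  assumes F: "PS2_submodule F"
  shows "Module.module PS2 (k_dual F)"
proof (rule moduleI)
  have mult: "\<And>a p. p \<in> F \<Longrightarrow> to_fract a * p \<in> F"
    using F by (simp add: PS2_submodule_def)
  show "cring PS2" by (rule cring_PS2)
  show "abelian_group (k_dual F)"
  proof (rule abelian_groupI)
    fix \<phi> assume "\<phi> \<in> carrier (k_dual F)"
    then show "\<exists>\<psi>\<in>carrier (k_dual F). \<psi> \<oplus>\<^bsub>k_dual F\<^esub> \<phi> = \<zero>\<^bsub>k_dual F\<^esub>"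
      by (intro bexI[of _ "\<lambda>q. - \<phi> q"]) (auto simp: k_linear_on_def)
  qed (auto simp: k_linear_on_def algebra_simps)
  fix a b :: "'k ps" and \<phi> assume \<phi>: "\<phi> \<in> carrier (k_dual F)"
  show "a \<odot>\<^bsub>k_dual F\<^esub> \<phi> \<in> carrier (k_dual F)"
    using F \<phi> by (rule k_dual_smult_closed)
  show "(a \<oplus>\<^bsub>PS2\<^esub> b) \<odot>\<^bsub>k_dual F\<^esub> \<phi> = a \<odot>\<^bsub>k_dual F\<^esub> \<phi> \<oplus>\<^bsub>k_dual F\<^esub> b \<odot>\<^bsub>k_dual F\<^esub> \<phi>"
    using \<phi> mult by (auto simp: fun_eq_iff to_fract_add distrib_right k_linear_on_def)
  show "(a \<otimes>\<^bsub>PS2\<^esub> b) \<odot>\<^bsub>k_dual F\<^esub> \<phi> = a \<odot>\<^bsub>k_dual F\<^esub> (b \<odot>\<^bsub>k_dual F\<^esub> \<phi>)"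
    using mult by (auto simp: fun_eq_iff to_fract_mult ac_simps)
  show "\<one>\<^bsub>PS2\<^esub> \<odot>\<^bsub>k_dual F\<^esub> \<phi> = \<phi>"
    using \<phi> by (auto simp: to_fract_one fun_eq_iff)
qed (auto simp: fun_eq_iff)

section \<open>Injectivity of the duals\<close>

lemma to_fract_power_mult_Fract_one:
  assumes "t \<noteq> 0"
  shows "to_fract (of_fps2 (t ^ m)) * Fract 1 (t ^ (n + m)) = Fract 1 (t ^ n)"
  using assms by (simp add: to_fract_mult_Fract eq_fract power_add mult.commute)

text \<open>Baer's criterion for \<open>D(A\<^sub>t)\<close>: a homomorphism \<open>h : J \<rightarrow> D(A\<^sub>t)\<close> gives the functional
  \<open>j / t\<^sup>n \<mapsto> h j (1 / t\<^sup>n)\<close> on the subspace \<open>J A\<^sub>t\<close> of the fraction field; any \<open>k\<close>-linear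
  extension of it, restricted to \<open>A\<^sub>t\<close>, is the required element of \<open>D(A\<^sub>t)\<close>.\<close>

definition Loc_ideal :: "'k::field fps fps \<Rightarrow> 'k ps set \<Rightarrow> 'k fps2_fract set" where
  "Loc_ideal t J = {Fract (to_fps2 x) (t ^ n) | x n. x \<in> J}"

lemma Fract_in_Loc_ideal: "x \<in> J \<Longrightarrow> Fract (to_fps2 x) (t ^ n) \<in> Loc_ideal t J"
  by (auto simp: Loc_ideal_def)

lemma Loc_idealE:
  assumes "p \<in> Loc_ideal t J"
  obtains x n where "x \<in> J" and "p = Fract (to_fps2 x) (t ^ n)"
  using assms by (auto simp: Loc_ideal_def)

definition baer_functional ::
    "'k::field fps fps \<Rightarrow> 'k ps set \<Rightarrow> ('k ps \<Rightarrow> 'k fps2_fract \<Rightarrow> 'k) \<Rightarrow> 'k fps2_fract \<Rightarrow> 'k" where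
  "baer_functional t J h = Loc_lift t (\<lambda>b. of_fps2 b \<in> J) (\<lambda>b n. h (of_fps2 b) (Fract 1 (t ^ n)))"

locale Loc_baer =
  fixes t :: "'k::field fps fps" and J :: "'k ps set" and h :: "'k ps \<Rightarrow> 'k fps2_fract \<Rightarrow> 'k"
  assumes t: "t \<noteq> 0" and J: "ideal J PS2"
    and h_carrier: "\<And>x. x \<in> J \<Longrightarrow> h x \<in> carrier (k_dual (Loc t))"
    and h_add: "\<And>x y. x \<in> J \<Longrightarrow> y \<in> J \<Longrightarrow> h (x \<oplus>\<^bsub>PS2\<^esub> y) = h x \<oplus>\<^bsub>k_dual (Loc t)\<^esub> h y"
    and h_smult: "\<And>a x. x \<in> J \<Longrightarrow> h (a \<otimes>\<^bsub>PS2\<^esub> x) = a \<odot>\<^bsub>k_dual (Loc t)\<^esub> h x"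
begin

lemma J_add_closed: "x \<in> J \<Longrightarrow> y \<in> J \<Longrightarrow> x \<oplus>\<^bsub>PS2\<^esub> y \<in> J"
  using additive_subgroup.a_closed[OF ideal.axioms(1)[OF J]] .

lemma J_mult_closed: "x \<in> J \<Longrightarrow> a \<otimes>\<^bsub>PS2\<^esub> x \<in> J"
  using ideal.I_l_closed[OF J] by simp

lemma h_smult_apply: "x \<in> J \<Longrightarrow> q \<in> Loc t \<Longrightarrow> h (a \<otimes>\<^bsub>PS2\<^esub> x) q = h x (to_fract a * q)"
  using h_smult by simp

lemma h_shift: "x \<in> J \<Longrightarrow> h (of_fps2 (t ^ m) \<otimes>\<^bsub>PS2\<^esub> x) (Fract 1 (t ^ (n + m))) = h x (Fract 1 (t ^ n))"
  by (simp add: h_smult_apply to_fract_power_mult_Fract_one[OF t])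

lemma baer_functional_Fract:
  assumes "x \<in> J"
  shows "baer_functional t J h (Fract (to_fps2 x) (t ^ n)) = h x (Fract 1 (t ^ n))"
proof -
  have resp: "h (of_fps2 b) (Fract 1 (t ^ n)) = h (of_fps2 b') (Fract 1 (t ^ m))"
    if "of_fps2 b \<in> J" "of_fps2 b' \<in> J" and e: "b * t ^ m = b' * t ^ n" for b b' n m
  proof -
    have "of_fps2 (t ^ m) \<otimes>\<^bsub>PS2\<^esub> of_fps2 b = of_fps2 (t ^ n) \<otimes>\<^bsub>PS2\<^esub> of_fps2 b'"
      by (rule to_fps2_eqI) (simp add: to_fps2_mult e mult.commute)
    then show ?thesis
      using h_shift[OF that(1), of m n] h_shift[OF that(2), of n m] by (simp add: add.commute)
  qed
  show ?thesis
    using assms by (simp add: baer_functional_def Loc_lift_Fract[OF t _ resp])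
qed

lemma Fract_add_in_Loc_ideal:
  "Fract (to_fps2 x) (t ^ n) + Fract (to_fps2 y) (t ^ m) =
     Fract (to_fps2 ((of_fps2 (t ^ m) \<otimes>\<^bsub>PS2\<^esub> x) \<oplus>\<^bsub>PS2\<^esub> (of_fps2 (t ^ n) \<otimes>\<^bsub>PS2\<^esub> y))) (t ^ (n + m))"
  by (simp add: Fract_power_add[OF t] to_fps2_add to_fps2_mult mult.commute)

lemma const_scale_in_Loc_ideal:
  "const_scale c (Fract (to_fps2 x) (t ^ n)) =
     Fract (to_fps2 (of_fps2 (fps_const (fps_const c)) \<otimes>\<^bsub>PS2\<^esub> x)) (t ^ n)"
  by (simp add: const_scale_Fract to_fps2_mult)

lemma k_linear_on_baer_functional: "k_linear_on (Loc_ideal t J) (baer_functional t J h)"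
  unfolding k_linear_on_def
proof (intro conjI ballI allI)
  fix p q assume "p \<in> Loc_ideal t J" "q \<in> Loc_ideal t J"
  then obtain x n y m where xy: "x \<in> J" "y \<in> J"
    and pq: "p = Fract (to_fps2 x) (t ^ n)" "q = Fract (to_fps2 y) (t ^ m)"
    by (metis Loc_idealE)
  let ?x = "of_fps2 (t ^ m) \<otimes>\<^bsub>PS2\<^esub> x" and ?y = "of_fps2 (t ^ n) \<otimes>\<^bsub>PS2\<^esub> y"
  have "baer_functional t J h (p + q) = h (?x \<oplus>\<^bsub>PS2\<^esub> ?y) (Fract 1 (t ^ (n + m)))"
    unfolding pq Fract_add_in_Loc_ideal
    using xy by (simp add: baer_functional_Fract J_add_closed J_mult_closed)
  also have "\<dots> = h ?x (Fract 1 (t ^ (n + m))) + h ?y (Fract 1 (t ^ (m + n)))"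
    using xy by (simp add: h_add J_mult_closed add.commute)
  also have "\<dots> = baer_functional t J h p + baer_functional t J h q"
    using xy by (simp add: pq h_shift baer_functional_Fract)
  finally show "baer_functional t J h (p + q) = baer_functional t J h p + baer_functional t J h q" .
next
  fix c p assume "p \<in> Loc_ideal t J"
  then obtain x n where x: "x \<in> J" and p: "p = Fract (to_fps2 x) (t ^ n)"
    by (rule Loc_idealE)
  have "baer_functional t J h (const_scale c p) = h x (const_scale c (Fract 1 (t ^ n)))"
    unfolding p const_scale_in_Loc_ideal
    using x by (simp add: baer_functional_Fract J_mult_closed h_smult_apply const_scale_eq_to_fract)
  also have "\<dots> = c * h x (Fract 1 (t ^ n))"
    using h_carrier[OF x] by (simp add: k_linear_on_def)
  finally show "baer_functional t J h (const_scale c p) = c * baer_functional t J h p"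
    using x by (simp add: p baer_functional_Fract)
qed

lemma zero_in_Loc_ideal: "0 \<in> Loc_ideal t J"
proof -
  have "Fract (to_fps2 \<zero>\<^bsub>PS2\<^esub>) (t ^ 0) \<in> Loc_ideal t J"
    using additive_subgroup.zero_closed[OF ideal.axioms(1)[OF J]] by (rule Fract_in_Loc_ideal)
  then show ?thesis
    by (simp add: to_fps2_zero Zero_fract_def)
qed

lemma Loc_ideal_add: "p \<in> Loc_ideal t J \<Longrightarrow> q \<in> Loc_ideal t J \<Longrightarrow> p + q \<in> Loc_ideal t J"
  by (auto elim!: Loc_idealE simp: Fract_add_in_Loc_ideal intro!: Fract_in_Loc_ideal J_add_closed J_mult_closed)

lemma Loc_ideal_const_scale: "p \<in> Loc_ideal t J \<Longrightarrow> const_scale c p \<in> Loc_ideal t J"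
  by (auto elim!: Loc_idealE simp: const_scale_in_Loc_ideal intro!: Fract_in_Loc_ideal J_mult_closed)

lemma extension: "\<exists>v\<in>carrier (k_dual (Loc t)). \<forall>x\<in>J. h x = x \<odot>\<^bsub>k_dual (Loc t)\<^esub> v"
proof -
  obtain g where g: "k_linear_on UNIV g"
    and g_eq: "\<And>p. p \<in> Loc_ideal t J \<Longrightarrow> g p = baer_functional t J h p"
    using k_linear_on_extend[OF zero_in_Loc_ideal Loc_ideal_add Loc_ideal_const_scale k_linear_on_baer_functional]
    by blast
  define v where "v q = (if q \<in> Loc t then g q else 0)" for q
  have "v \<in> carrier (k_dual (Loc t))"
    using g by (auto simp: v_def k_linear_on_def Loc_add[OF t] Loc_const_scale)
  moreover have "h x = x \<odot>\<^bsub>k_dual (Loc t)\<^esub> v" if x: "x \<in> J" for x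
  proof
    fix q
    show "h x q = (x \<odot>\<^bsub>k_dual (Loc t)\<^esub> v) q"
    proof (cases "q \<in> Loc t")
      case True
      then obtain b n where q: "q = Fract b (t ^ n)" by (rule LocE)
      let ?a = "of_fps2 b"
      have "(x \<odot>\<^bsub>k_dual (Loc t)\<^esub> v) q = g (Fract (to_fps2 (?a \<otimes>\<^bsub>PS2\<^esub> x)) (t ^ n))"
        using True Loc_to_fract_mult by (simp add: v_def q to_fract_mult_Fract to_fps2_mult mult.commute)
      also have "\<dots> = h (?a \<otimes>\<^bsub>PS2\<^esub> x) (Fract 1 (t ^ n))"
        using x by (simp add: g_eq Fract_in_Loc_ideal baer_functional_Fract J_mult_closed)
      also have "\<dots> = h x q"
        using x by (simp add: h_smult_apply q to_fract_mult_Fract)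
      finally show ?thesis by simp
    next
      case False
      then show ?thesis
        using h_carrier[OF x] by simp
    qed
  qed
  ultimately show ?thesis
    by blast
qed

end

lemma injective_module_k_dual_Loc:
  assumes "t \<noteq> 0"
  shows "injective_module PS2 (k_dual (Loc t))"
proof (rule injective_moduleI)
  show "Module.module PS2 (k_dual (Loc t))"
    by (rule module_k_dual[OF PS2_submodule_Loc[OF assms]])
  fix J h
  assume J: "ideal J PS2" and hJ: "h \<in> J \<rightarrow> carrier (k_dual (Loc t))"
    and add: "\<And>x y. x \<in> J \<Longrightarrow> y \<in> J \<Longrightarrow> h (x \<oplus>\<^bsub>PS2\<^esub> y) = h x \<oplus>\<^bsub>k_dual (Loc t)\<^esub> h y"
    and smult: "\<And>a x. a \<in> carrier PS2 \<Longrightarrow> x \<in> J \<Longrightarrow> h (a \<otimes>\<^bsub>PS2\<^esub> x) = a \<odot>\<^bsub>k_dual (Loc t)\<^esub> h x"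
  show "\<exists>v\<in>carrier (k_dual (Loc t)). \<forall>x\<in>J. h x = x \<odot>\<^bsub>k_dual (Loc t)\<^esub> v"
  proof (rule Loc_baer.extension[OF Loc_baer.intro[OF assms J _ add]])
    show "\<And>x. x \<in> J \<Longrightarrow> h x \<in> carrier (k_dual (Loc t))"
      using hJ by (rule funcset_mem)
    show "\<And>a x. x \<in> J \<Longrightarrow> h (a \<otimes>\<^bsub>PS2\<^esub> x) = a \<odot>\<^bsub>k_dual (Loc t)\<^esub> h x"
      using smult by simp
  qed
qed

section \<open>The counterexample\<close>

definition restrict_dual :: "'k::field fps2_fract set \<Rightarrow> ('k fps2_fract \<Rightarrow> 'k) \<Rightarrow> 'k fps2_fract \<Rightarrow> 'k" where
  "restrict_dual F \<phi> q = (if q \<in> F then \<phi> q else 0)"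

lemma restrict_dual_module_hom:
  assumes F: "PS2_submodule F" and FG: "F \<subseteq> G"
  shows "restrict_dual F \<in> Defs.module_hom PS2 (k_dual G) (k_dual F)"
proof -
  have add: "\<And>p q. p \<in> F \<Longrightarrow> q \<in> F \<Longrightarrow> p + q \<in> F"
    and mult: "\<And>a p. p \<in> F \<Longrightarrow> to_fract a * p \<in> F"
    using F by (simp_all add: PS2_submodule_def)
  note scale = PS2_submodule_const_scale[OF F]
  have "restrict_dual F \<phi> \<in> carrier (k_dual F)" if "\<phi> \<in> carrier (k_dual G)" for \<phi>
    using that FG add scale by (auto simp: restrict_dual_def k_linear_on_def subset_iff)
  moreover have "restrict_dual F (a \<odot>\<^bsub>k_dual G\<^esub> \<phi>) = a \<odot>\<^bsub>k_dual F\<^esub> restrict_dual F \<phi>" for a \<phi>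
    using FG mult by (auto simp: restrict_dual_def fun_eq_iff)
  moreover have "restrict_dual F (\<phi> \<oplus>\<^bsub>k_dual G\<^esub> \<psi>) =
      restrict_dual F \<phi> \<oplus>\<^bsub>k_dual F\<^esub> restrict_dual F \<psi>" for \<phi> \<psi>
    by (simp add: restrict_dual_def fun_eq_iff)
  ultimately show ?thesis
    by (simp add: Defs.module_hom_def del: k_dual_simps(1))
qed

lemma fps2_nth_mult_XY_power:
  "(b * (fps_X * fps_Y) ^ m) $ i $ j = (if i < m \<or> j < m then 0 else b $ (i - m) $ (j - m))"
proof -
  have "b * (fps_X * fps_Y) ^ m = b * fps_Y ^ m * fps_X ^ m"
    by (simp add: power_mult_distrib mult_ac del: fps_const_power)
  then show ?thesis
    by (simp only: fps2_nth_mult_X_power fps2_nth_mult_Y_power) auto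
qed

text \<open>The constant term of the Laurent expansion: \<open>b / (x y)\<^sup>n \<mapsto>\<close> the coefficient of
  \<open>x\<^sup>n y\<^sup>n\<close> in \<open>b\<close>.\<close>

definition const_coeff :: "'k::field fps2_fract \<Rightarrow> 'k" where
  "const_coeff q = (if q \<in> Loc (fps_X * fps_Y)
     then Loc_lift (fps_X * fps_Y) (\<lambda>_. True) (\<lambda>b n. b $ n $ n) q else 0)"

lemma const_coeff_Fract: "const_coeff (Fract b ((fps_X * fps_Y) ^ n)) = b $ n $ n"
proof -
  have resp: "b $ n $ n = b' $ m $ m" if "b * (fps_X * fps_Y) ^ m = b' * (fps_X * fps_Y) ^ n"
    for b b' :: "'a fps fps" and n m
  proof -
    have "(b * (fps_X * fps_Y) ^ m) $ (n + m) $ (n + m) = (b' * (fps_X * fps_Y) ^ n) $ (n + m) $ (n + m)"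
      by (simp only: that)
    then show ?thesis
      by (simp only: fps2_nth_mult_XY_power) simp
  qed
  have "Loc_lift (fps_X * fps_Y) (\<lambda>_. True) (\<lambda>b n. b $ n $ n) (Fract b ((fps_X * fps_Y) ^ n)) = b $ n $ n"
    by (rule Loc_lift_Fract) (auto intro: resp)
  then show ?thesis
    by (simp only: const_coeff_def Fract_in_Loc if_True)
qed

lemma Fract_X_power_eq: "Fract b (fps_X ^ n) = Fract (b * fps_Y ^ n) ((fps_X * fps_Y) ^ n)"
  by (simp add: eq_fract power_mult_distrib mult_ac del: fps_const_power)

lemma Fract_Y_power_eq: "Fract b (fps_Y ^ n) = Fract (b * fps_X ^ n) ((fps_X * fps_Y) ^ n)"
  by (simp add: eq_fract power_mult_distrib mult_ac del: fps_const_power)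

lemma const_coeff_in_k_dual: "const_coeff \<in> carrier (k_dual (Loc (fps_X * fps_Y :: 'k::field fps fps)))"
proof -
  have t: "fps_X * fps_Y \<noteq> (0 :: 'k fps fps)" by simp
  have "const_coeff (p + q) = const_coeff p + const_coeff q"
    if "p \<in> Loc (fps_X * fps_Y)" "q \<in> Loc (fps_X * fps_Y)" for p q :: "'k fps2_fract"
    using that by (auto elim!: LocE simp: Fract_power_add[OF t] const_coeff_Fract
        fps2_nth_mult_XY_power simp del: power_mult_distrib)
  moreover have "const_coeff (const_scale c p) = c * const_coeff p"
    if "p \<in> Loc (fps_X * fps_Y)" for c and p :: "'k fps2_fract"
    using that by (auto elim!: LocE simp: const_scale_Fract const_coeff_Fract simp del: power_mult_distrib)
  ultimately show ?thesis
    by (auto simp: k_linear_on_def const_coeff_def)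
qed

lemma const_coeff_to_fract: "const_coeff (to_fract a) = a (0, 0)"
  using const_coeff_Fract[of "to_fps2 a" 0] by (simp add: to_fract_def)

lemma const_coeff_X_mult_Loc_Y:
  assumes "q \<in> Loc fps_Y"
  shows "const_coeff (to_fract PS2_X * q) = 0"
proof -
  obtain b n where "q = Fract b (fps_Y ^ n)" using assms by (rule LocE)
  then have "to_fract PS2_X * q = Fract (fps_X * b) (fps_Y ^ n)"
    by (simp add: to_fract_mult_Fract to_fps2_PS2_X del: fps_const_power)
  also have "\<dots> = Fract (b * fps_X ^ Suc n) ((fps_X * fps_Y) ^ n)"
    by (simp add: Fract_Y_power_eq mult_ac del: fps_const_power)
  finally show ?thesis
    by (simp add: const_coeff_Fract fps2_nth_mult_X_power del: power_Suc)
qed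

lemma const_coeff_Y_mult_Loc_X:
  assumes "q \<in> Loc fps_X"
  shows "const_coeff (to_fract PS2_Y * q) = 0"
proof -
  obtain b n where "q = Fract b (fps_X ^ n)" using assms by (rule LocE)
  then have "to_fract PS2_Y * q = Fract (fps_Y * b) (fps_X ^ n)"
    by (simp add: to_fract_mult_Fract to_fps2_PS2_Y del: fps_const_power)
  also have "\<dots> = Fract (b * fps_Y ^ Suc n) ((fps_X * fps_Y) ^ n)"
    by (simp add: Fract_X_power_eq mult_ac del: fps_const_power)
  finally show ?thesis
    by (simp add: const_coeff_Fract fps2_nth_mult_Y_power del: power_Suc fps_const_power)
qed

lemma k_dual_Loc_smult_eq_zeroD:
  assumes t: "t \<noteq> 0" and T: "to_fps2 T * s = t"
    and \<phi>: "\<phi> \<in> carrier (k_dual (Loc t))" and zero: "T \<odot>\<^bsub>k_dual (Loc t)\<^esub> \<phi> = \<zero>\<^bsub>k_dual (Loc t)\<^esub>"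
  shows "\<phi> = \<zero>\<^bsub>k_dual (Loc t)\<^esub>"
proof
  fix q
  show "\<phi> q = \<zero>\<^bsub>k_dual (Loc t)\<^esub> q"
  proof (cases "q \<in> Loc t")
    case True
    then obtain b n where q: "q = Fract b (t ^ n)" by (rule LocE)
    have "q = to_fract T * Fract (b * s) (t ^ Suc n)"
      using t by (simp add: q to_fract_mult_Fract eq_fract ac_simps flip: T)
    moreover have "(T \<odot>\<^bsub>k_dual (Loc t)\<^esub> \<phi>) (Fract (b * s) (t ^ Suc n)) = 0"
      using zero by simp
    ultimately show ?thesis
      by (simp del: power_Suc)
  next
    case False
    with \<phi> show ?thesis by simp
  qed
qed

lemma PS2_X_in_PS2_max: "PS2_X \<in> PS2_max"
  and PS2_Y_in_PS2_max: "PS2_Y \<in> PS2_max"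
  by (simp_all add: PS2_max_eq PS2_X_def PS2_Y_def)

lemma Spec_PS2_max: "PS2_max \<in> Spec PS2"
  by (simp add: Spec_def primeideal_PS2_max)

lemma Inj_Phi_k_dual_Loc:
  assumes t: "t \<noteq> 0" and T: "T \<in> PS2_max" "to_fps2 T * s = t"
  shows "Inj_Phi PS2 (Spec PS2 - {PS2_max}) (k_dual (Loc t))"
proof -
  have "PS2_max \<notin> Ass PS2 (k_dual (Loc t))"
    using module_k_dual[OF PS2_submodule_Loc[OF t]]
  proof (rule notin_Ass)
    fix \<phi> assume "\<phi> \<in> carrier (k_dual (Loc t))" "\<forall>a\<in>PS2_max. a \<odot>\<^bsub>k_dual (Loc t)\<^esub> \<phi> = \<zero>\<^bsub>k_dual (Loc t)\<^esub>"
    with T show "\<phi> = \<zero>\<^bsub>k_dual (Loc t)\<^esub>"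
      using k_dual_Loc_smult_eq_zeroD[OF t T(2)] by blast
  qed
  with injective_module_k_dual_Loc[OF t] show ?thesis
    by (simp add: Inj_Phi_Spec_Diff)
qed

abbreviation dual_Loc_xy :: "('k::field ps, 'k fps2_fract \<Rightarrow> 'k) module" where
  "dual_Loc_xy \<equiv> k_dual (Loc (fps_X * fps_Y))"

abbreviation dual_Loc_x_y ::
    "('k::field ps, ('k fps2_fract \<Rightarrow> 'k) \<times> ('k fps2_fract \<Rightarrow> 'k)) module" where
  "dual_Loc_x_y \<equiv> prod_module (k_dual (Loc fps_X)) (k_dual (Loc fps_Y))"

lemma module_dual_Loc_x_y: "Module.module PS2 (dual_Loc_x_y :: ('k::field ps, _) module)"
  by (intro module_prod_module module_k_dual PS2_submodule_Loc) simp_all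

lemma Inj_Phi_dual_Loc_xy: "Inj_Phi PS2 (Spec PS2 - {PS2_max}) dual_Loc_xy"
  by (rule Inj_Phi_k_dual_Loc[OF _ PS2_X_in_PS2_max, of _ fps_Y]) (simp_all add: to_fps2_PS2_X)

lemma Inj_Phi_dual_Loc_x_y:
  "Inj_Phi PS2 (Spec PS2 - {PS2_max}) (dual_Loc_x_y :: ('k::field ps, _) module)"
proof -
  have "injective_module PS2 (dual_Loc_x_y :: ('k ps, _) module)"
    by (simp add: injective_module_prod_module injective_module_k_dual_Loc)
  moreover have "PS2_max \<notin> Ass PS2 (dual_Loc_x_y :: ('k ps, _) module)"
    using module_dual_Loc_x_y
  proof (rule notin_Ass)
    fix v :: "('k fps2_fract \<Rightarrow> 'k) \<times> ('k fps2_fract \<Rightarrow> 'k)"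
    assume "v \<in> carrier dual_Loc_x_y" "\<forall>a\<in>PS2_max. a \<odot>\<^bsub>dual_Loc_x_y\<^esub> v = \<zero>\<^bsub>dual_Loc_x_y\<^esub>"
    then have "fst v \<in> carrier (k_dual (Loc fps_X))" "PS2_X \<odot>\<^bsub>k_dual (Loc fps_X)\<^esub> fst v = (\<lambda>q. 0)"
      and "snd v \<in> carrier (k_dual (Loc fps_Y))" "PS2_Y \<odot>\<^bsub>k_dual (Loc fps_Y)\<^esub> snd v = (\<lambda>q. 0)"
      using PS2_X_in_PS2_max PS2_Y_in_PS2_max by (auto simp del: k_dual_simps(4))
    then show "v = \<zero>\<^bsub>dual_Loc_x_y\<^esub>"
      using k_dual_Loc_smult_eq_zeroD[of fps_X PS2_X 1] k_dual_Loc_smult_eq_zeroD[of fps_Y PS2_Y 1]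
      by (auto simp: to_fps2_PS2_X to_fps2_PS2_Y prod_eq_iff simp del: k_dual_simps(4))
  qed
  ultimately show ?thesis
    by (simp add: Inj_Phi_Spec_Diff)
qed

definition dual_restrictions ::
    "('k::field fps2_fract \<Rightarrow> 'k) \<Rightarrow> ('k fps2_fract \<Rightarrow> 'k) \<times> ('k fps2_fract \<Rightarrow> 'k)" where
  "dual_restrictions \<phi> = (restrict_dual (Loc fps_X) \<phi>, restrict_dual (Loc fps_Y) \<phi>)"

lemma Loc_X_subset: "Loc fps_X \<subseteq> Loc (fps_X * fps_Y :: 'k::field fps fps)"
  by (rule Loc_subset_mult) simp_all

lemma Loc_Y_subset: "Loc fps_Y \<subseteq> Loc (fps_X * fps_Y :: 'k::field fps fps)"
  using Loc_subset_mult[of fps_Y fps_X] by (simp add: mult.commute)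

lemma restrict_dual_X_module_hom:
  "restrict_dual (Loc fps_X) \<in> Defs.module_hom PS2 dual_Loc_xy (k_dual (Loc (fps_X :: 'k::field fps fps)))"
  by (rule restrict_dual_module_hom[OF PS2_submodule_Loc Loc_X_subset]) simp

lemma restrict_dual_Y_module_hom:
  "restrict_dual (Loc fps_Y) \<in> Defs.module_hom PS2 dual_Loc_xy (k_dual (Loc (fps_Y :: 'k::field fps fps)))"
  by (rule restrict_dual_module_hom[OF PS2_submodule_Loc Loc_Y_subset]) simp

lemma dual_restrictions_module_hom:
  "dual_restrictions \<in> Defs.module_hom PS2 dual_Loc_xy (dual_Loc_x_y :: ('k::field ps, _) module)"
  unfolding dual_restrictions_def
  by (rule module_hom_pair[OF restrict_dual_X_module_hom restrict_dual_Y_module_hom])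

definition max_witness :: "('k::field fps2_fract \<Rightarrow> 'k) \<times> ('k fps2_fract \<Rightarrow> 'k)" where
  "max_witness = (restrict_dual (Loc fps_X) const_coeff, \<lambda>q. 0)"

lemma max_witness_in_carrier: "max_witness \<in> carrier (dual_Loc_x_y :: ('k::field ps, _) module)"
  using module_hom_closed[OF restrict_dual_X_module_hom const_coeff_in_k_dual]
  by (simp add: max_witness_def k_linear_on_def del: k_dual_simps(1)) (simp add: k_linear_on_def)

lemma smult_max_witness:
  "a \<odot>\<^bsub>dual_Loc_x_y\<^esub> max_witness = (restrict_dual (Loc fps_X) (a \<odot>\<^bsub>dual_Loc_xy\<^esub> const_coeff), \<lambda>q. 0)"
proof -
  have "restrict_dual (Loc fps_X) (a \<odot>\<^bsub>dual_Loc_xy\<^esub> const_coeff) =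
      a \<odot>\<^bsub>k_dual (Loc fps_X)\<^esub> restrict_dual (Loc fps_X) const_coeff"
    using module_hom_smult[OF restrict_dual_X_module_hom _ const_coeff_in_k_dual] by simp
  then show ?thesis
    by (simp add: max_witness_def del: k_dual_simps(4)) (simp add: fun_eq_iff)
qed

lemma PS2_X_smult_max_witness:
  "PS2_X \<odot>\<^bsub>dual_Loc_x_y\<^esub> max_witness = dual_restrictions (PS2_X \<odot>\<^bsub>dual_Loc_xy\<^esub> const_coeff)"
  unfolding smult_max_witness dual_restrictions_def
  using const_coeff_X_mult_Loc_Y Loc_Y_subset by (auto simp: restrict_dual_def fun_eq_iff)

lemma PS2_Y_smult_max_witness:
  "PS2_Y \<odot>\<^bsub>dual_Loc_x_y\<^esub> max_witness = dual_restrictions \<zero>\<^bsub>dual_Loc_xy\<^esub>"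
  unfolding smult_max_witness dual_restrictions_def
  using const_coeff_Y_mult_Loc_X Loc_X_subset by (auto simp: restrict_dual_def fun_eq_iff)

lemma smult_max_witness_in_image:
  fixes a :: "'k::field ps"
  assumes "a \<in> PS2_max"
  shows "a \<odot>\<^bsub>dual_Loc_x_y\<^esub> max_witness \<in> dual_restrictions ` carrier dual_Loc_xy"
proof -
  obtain b c where a: "a = (b \<otimes>\<^bsub>PS2\<^esub> PS2_X) \<oplus>\<^bsub>PS2\<^esub> (c \<otimes>\<^bsub>PS2\<^esub> PS2_Y)"
    using assms by (auto simp: PS2_max_eq elim: PS2_decomp_XY)
  interpret I1: Module.module PS2 "dual_Loc_x_y :: ('k ps, _) module"
    by (rule module_dual_Loc_x_y)
  have "a \<odot>\<^bsub>dual_Loc_x_y\<^esub> max_witness =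
      (b \<otimes>\<^bsub>PS2\<^esub> PS2_X) \<odot>\<^bsub>dual_Loc_x_y\<^esub> max_witness \<oplus>\<^bsub>dual_Loc_x_y\<^esub>
      (c \<otimes>\<^bsub>PS2\<^esub> PS2_Y) \<odot>\<^bsub>dual_Loc_x_y\<^esub> max_witness"
    unfolding a by (rule I1.smult_l_distr) (simp_all add: max_witness_in_carrier del: prod_module_simps)
  also have "\<dots> = b \<odot>\<^bsub>dual_Loc_x_y\<^esub> (PS2_X \<odot>\<^bsub>dual_Loc_x_y\<^esub> max_witness) \<oplus>\<^bsub>dual_Loc_x_y\<^esub>
      c \<odot>\<^bsub>dual_Loc_x_y\<^esub> (PS2_Y \<odot>\<^bsub>dual_Loc_x_y\<^esub> max_witness)"
    using I1.smult_assoc1[OF _ _ max_witness_in_carrier] by simp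
  also have "\<dots> \<in> dual_restrictions ` carrier dual_Loc_xy"
    unfolding PS2_X_smult_max_witness PS2_Y_smult_max_witness
    using module_k_dual dual_restrictions_module_hom
  proof (rule module_hom_image_lincomb)
    show "PS2_submodule (Loc (fps_X * fps_Y))" by (simp add: PS2_submodule_Loc)
    have "PS2_X \<odot>\<^bsub>dual_Loc_xy\<^esub> const_coeff \<in> carrier dual_Loc_xy"
      using module.smult_closed[OF module_k_dual[OF PS2_submodule_Loc], of "fps_X * fps_Y" PS2_X]
        const_coeff_in_k_dual by (simp del: k_dual_simps)
    then show "dual_restrictions (PS2_X \<odot>\<^bsub>dual_Loc_xy\<^esub> const_coeff) \<in> dual_restrictions ` carrier dual_Loc_xy"
      by blast
    show "dual_restrictions \<zero>\<^bsub>dual_Loc_xy\<^esub> \<in> dual_restrictions ` carrier dual_Loc_xy"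
      by (auto simp: k_linear_on_def)
  qed simp_all
  finally show ?thesis .
qed

lemma smult_max_witness_in_imageD:
  assumes "a \<odot>\<^bsub>dual_Loc_x_y\<^esub> max_witness \<in> dual_restrictions ` carrier dual_Loc_xy"
  shows "a \<in> PS2_max"
proof -
  obtain \<phi> where "a \<odot>\<^bsub>dual_Loc_x_y\<^esub> max_witness = dual_restrictions \<phi>"
    using assms by blast
  then have "restrict_dual (Loc fps_X) (a \<odot>\<^bsub>dual_Loc_xy\<^esub> const_coeff) = restrict_dual (Loc fps_X) \<phi>"
    and "(\<lambda>q. 0) = restrict_dual (Loc fps_Y) \<phi>"
    by (simp_all only: smult_max_witness dual_restrictions_def prod.inject)
  then have "restrict_dual (Loc fps_X) (a \<odot>\<^bsub>dual_Loc_xy\<^esub> const_coeff) 1 = \<phi> 1" and "0 = \<phi> 1"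
    by (auto simp: restrict_dual_def one_in_Loc dest: fun_cong[where x = 1])
  moreover have "restrict_dual (Loc fps_X) (a \<odot>\<^bsub>dual_Loc_xy\<^esub> const_coeff) 1 = a (0, 0)"
    by (simp add: restrict_dual_def one_in_Loc const_coeff_to_fract)
  ultimately show ?thesis
    by (simp add: PS2_max_eq)
qed

definition ps_pair :: "'k::zero ps \<Rightarrow> 'k \<Rightarrow> 'k ps" where
  "ps_pair a c = (\<lambda>(i, j). if i = 0 then (if j = 0 then c else 0) else a (i - 1, j))"

lemma ps_pair_inject: "ps_pair a c = ps_pair a' c' \<Longrightarrow> a = a' \<and> c = c'"
proof
  assume eq: "ps_pair a c = ps_pair a' c'"
  show "a = a'"
  proof
    fix p :: "nat \<times> nat"
    show "a p = a' p"
      using fun_cong[OF eq, of "(Suc (fst p), snd p)"] by (simp add: ps_pair_def)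
  qed
  show "c = c'"
    using fun_cong[OF eq, of "(0, 0)"] by (simp add: ps_pair_def)
qed

definition graph_code :: "('k::zero ps \<Rightarrow> 'k) \<Rightarrow> 'k ps set" where
  "graph_code g = range (\<lambda>a. ps_pair a (g a))"

lemma inj_graph_code: "inj (graph_code :: ('k::zero ps \<Rightarrow> 'k) \<Rightarrow> _)"
proof
  fix g g' :: "'k ps \<Rightarrow> 'k"
  assume eq: "graph_code g = graph_code g'"
  show "g = g'"
  proof
    fix a
    have "ps_pair a (g a) \<in> graph_code g'"
      using eq by (auto simp: graph_code_def)
    then show "g a = g' a"
      by (auto simp: graph_code_def dest: ps_pair_inject)
  qed
qed

text \<open>Coherence only speaks about modules with carrier in \<open>nat \<Rightarrow> 'k ps set\<close>: an element
  \<open>\<phi>\<close> of \<open>Hom\<^sub>k(A\<^sub>t, k)\<close> is recorded by the graphs of \<open>a \<mapsto> \<phi>(a / t\<^sup>n)\<close>, \<open>n \<in> \<nat>\<close>.\<close>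

definition dual_code :: "'k::field fps fps \<Rightarrow> ('k fps2_fract \<Rightarrow> 'k) \<Rightarrow> nat \<Rightarrow> 'k ps set" where
  "dual_code t \<phi> n = graph_code (\<lambda>a. \<phi> (Fract (to_fps2 a) (t ^ n)))"

lemma inj_on_dual_code: "inj_on (dual_code t) (carrier (k_dual (Loc t)))"
proof
  fix \<phi> \<psi> assume \<phi>: "\<phi> \<in> carrier (k_dual (Loc t))" and \<psi>: "\<psi> \<in> carrier (k_dual (Loc t))"
    and eq: "dual_code t \<phi> = dual_code t \<psi>"
  have "graph_code (\<lambda>a. \<phi> (Fract (to_fps2 a) (t ^ n))) = graph_code (\<lambda>a. \<psi> (Fract (to_fps2 a) (t ^ n)))"
    for n
    using fun_cong[OF eq, of n] by (simp add: dual_code_def)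
  then have "\<phi> (Fract (to_fps2 a) (t ^ n)) = \<psi> (Fract (to_fps2 a) (t ^ n))" for a n
    by (metis injD[OF inj_graph_code])
  then have on_Loc: "\<phi> q = \<psi> q" if "q \<in> Loc t" for q
    using that by (metis LocE to_fps2_of_fps2)
  show "\<phi> = \<psi>"
  proof
    fix q
    show "\<phi> q = \<psi> q"
      using \<phi> \<psi> on_Loc by (cases "q \<in> Loc t") auto
  qed
qed

definition interleave :: "(nat \<Rightarrow> 'a) \<Rightarrow> (nat \<Rightarrow> 'a) \<Rightarrow> nat \<Rightarrow> 'a" where
  "interleave u v n = (if even n then u (n div 2) else v (n div 2))"

lemma interleave_inject:
  assumes "interleave u v = interleave u' v'"
  shows "u = u' \<and> v = v'"
proof
  show "u = u'"
    using fun_cong[OF assms, of "2 * n" for n] by (auto simp: interleave_def fun_eq_iff)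
  show "v = v'"
    using fun_cong[OF assms, of "2 * n + 1" for n] by (auto simp: interleave_def fun_eq_iff)
qed

lemma inj_on_interleave_codes:
  "inj_on (\<lambda>(\<phi>, \<psi>). interleave (dual_code fps_X \<phi>) (dual_code fps_Y \<psi>))
     (carrier (dual_Loc_x_y :: ('k::field ps, _) module))"
  using inj_on_dual_code[of fps_X] inj_on_dual_code[of fps_Y]
  by (auto simp: inj_on_def dest!: interleave_inject simp del: k_dual_simps)

theorem mainTheorem7:
  "\<not> coherent_on TYPE(nat \<Rightarrow> (nat \<times> nat \<Rightarrow> 'k::field) set) TYPE('c)
       (PS2 :: (nat \<times> nat \<Rightarrow> 'k) ring) (Spec (PS2 :: (nat \<times> nat \<Rightarrow> 'k) ring) - {PS2_max})"
proof
  assume coh: "coherent_on TYPE(nat \<Rightarrow> 'k ps set) TYPE('c) (PS2 :: 'k ps ring) (Spec PS2 - {PS2_max})"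
  obtain I2 :: "('k ps, 'c) module" and g where I2: "Inj_Phi PS2 (Spec PS2 - {PS2_max}) I2"
    and g: "g \<in> Defs.module_hom PS2 dual_Loc_x_y I2" and ex: "exact_at dual_Loc_xy dual_Loc_x_y I2 dual_restrictions g"
    by (rule coherent_onE[OF coh Inj_Phi_dual_Loc_xy Inj_Phi_dual_Loc_x_y dual_restrictions_module_hom
          inj_on_dual_code inj_on_interleave_codes])
  have "PS2_max \<in> Ass PS2 I2"
    using module_dual_Loc_x_y g ex max_witness_in_carrier Spec_PS2_max
  proof (rule Ass_of_exact_at)
    show "a \<odot>\<^bsub>dual_Loc_x_y\<^esub> max_witness \<in> dual_restrictions ` carrier dual_Loc_xy \<longleftrightarrow> a \<in> PS2_max" for a
      using smult_max_witness_in_image smult_max_witness_in_imageD by blast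
  qed
  with I2 show False
    by (simp add: Inj_Phi_Spec_Diff)
qed

end
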